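(* Let $0<b<1$ be fixed, let $\beta=1-b$, and let $t,k$ be constants with $t>\frac{1+\log 2}{\beta}-\log\beta$ and $k>\frac{2t}{1-e^{-t}}$. If $p=p(n)$ satisfies $np\ge k\log n$, then the random graph $G=\mathcal G(n,p)$ asymptotically almost surely has $\iota_v(G)\ge b$.
   Context: $\mathcal G(n,p)$ is the Erdős–Rényi random graph on $n$ labelled vertices with each edge present independently with probability $p$. "Asymptotically almost surely" means with probability tending to $1$ as $n\to\infty$. $\log$ is the natural logarithm. For a graph $G$ on $n$ vertices, $N(S)$ is the set of vertices with a neighbour in $S$ and $\iota_v(G)=\min_{0<|S|\le n/2}|N(S)\setminus S|/|S|$. *)

theory Defs
  imports Complex_Main
begin

text \<open>Graphs on the labelled vertex set {0..<n} are represented by their edge sets: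
  sets of 2-element subsets {u,v} (u \<noteq> v) of {0..<n}.\<close>

definition all_edges :: "nat \<Rightarrow> nat set set" where
  "all_edges n = {e. \<exists>u v. u < n \<and> v < n \<and> u \<noteq> v \<and> e = {u, v}}"

text \<open>Probability that G(n,p) has property P: each of the possible edges is present
  independently with probability p.\<close>

definition gnp_prob :: "nat \<Rightarrow> real \<Rightarrow> (nat set set \<Rightarrow> bool) \<Rightarrow> real" where
  "gnp_prob n p P =
     (\<Sum>E \<in> {E. E \<subseteq> all_edges n \<and> P E}.
        p ^ card E * (1 - p) ^ (card (all_edges n) - card E))"

definition nbhd :: "nat set set \<Rightarrow> nat set \<Rightarrow> nat set" where
  "nbhd E S = {v. \<exists>u \<in> S. {u, v} \<in> E}"

definition iota_v :: "nat \<Rightarrow> nat set set \<Rightarrow> real" where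
  "iota_v n E = Min {real (card (nbhd E S - S)) / real (card S) | S.
                       S \<subseteq> {..<n} \<and> 0 < card S \<and> real (card S) \<le> real n / 2}"

end

theory Submission
  imports Defs "HOL-Real_Asymp.Real_Asymp"
begin

text \<open>If \<open>\<iota>\<^sub>v(G) < b\<close>, a minimising set \<open>S\<close> together with \<open>U = N(S) - S\<close> satisfies
  \<open>|U| < b |S|\<close>, and \<open>G\<close> has none of the \<open>|S| (n - |S| - |U|)\<close> edges between \<open>S\<close> and the
  vertices outside \<open>S \<union> U\<close>. A union bound over all such pairs \<open>(S, U)\<close> bounds the failure
  probability by a sum of terms \<open>exp (- p |S| (n - |S| - b |S|))\<close>. When \<open>|S|\<close> is at most a small
  multiple of \<open>n\<close>, this is at most \<open>y ^ (|S| + |U|)\<close> with \<open>y = n powr (- (k + 2) / 4)\<close>, and these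
  terms sum to \<open>(exp (n y) - 1) exp (n y) \<longlonglongrightarrow> 0\<close> because \<open>k > 2\<close>; for larger \<open>S\<close> the exponent
  is of order \<open>n ln n\<close>, which beats the \<open>4 ^ n\<close> pairs.\<close>

lemma finite_all_edges: "finite (all_edges n)"
proof (rule finite_subset)
  show "all_edges n \<subseteq> Pow {..<n}" unfolding all_edges_def by auto
qed simp

lemma gnp_prob_disjoint:
  assumes F: "F \<subseteq> all_edges n"
  shows "gnp_prob n p (\<lambda>E. E \<inter> F = {}) = (1 - p) ^ card F"
proof -
  let ?A = "all_edges n"
  define f where "f e = (if e \<in> F then 0 else p)" for e :: "nat set"
  have fin: "finite ?A" by (rule finite_all_edges)
  have weight: "(\<Prod>e\<in>X. f e) * (\<Prod>e\<in>?A - X. 1 - p)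
      = (if X \<inter> F = {} then p ^ card X * (1 - p) ^ (card ?A - card X) else 0)"
    if X: "X \<subseteq> ?A" for X
  proof -
    have "finite X" using X fin by (rule finite_subset)
    moreover have "(\<Prod>e\<in>X. f e) = (if X \<inter> F = {} then p ^ card X else 0)"
    proof (cases "X \<inter> F = {}")
      case True
      then have "(\<Prod>e\<in>X. f e) = (\<Prod>e\<in>X. p)" by (intro prod.cong) (auto simp: f_def)
      with True show ?thesis by simp
    next
      case False
      with \<open>finite X\<close> show ?thesis by (auto simp: f_def)
    qed
    ultimately show ?thesis using X by (simp add: card_Diff_subset)
  qed
  have "gnp_prob n p (\<lambda>E. E \<inter> F = {})
      = (\<Sum>X\<in>Pow ?A. if X \<inter> F = {} then p ^ card X * (1 - p) ^ (card ?A - card X) else 0)"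
    unfolding gnp_prob_def by (simp add: sum.inter_filter[symmetric] fin Pow_def)
  also have "\<dots> = (\<Sum>X\<in>Pow ?A. (\<Prod>e\<in>X. f e) * (\<Prod>e\<in>?A - X. 1 - p))"
    using weight by (intro sum.cong) auto
  also have "\<dots> = (\<Prod>e\<in>?A. f e + (1 - p))"
    by (rule prod_add[OF fin, symmetric])
  also have "\<dots> = (\<Prod>e\<in>?A. if e \<in> F then 1 - p else 1)"
    by (intro prod.cong) (auto simp: f_def)
  also have "\<dots> = (1 - p) ^ card F"
    using F by (simp add: prod.If_cases[OF fin] Int_absorb1)
  finally show ?thesis .
qed

lemma gnp_prob_True: "gnp_prob n p (\<lambda>E. True) = 1"
  using gnp_prob_disjoint[of "{}" n p] by simp

lemma gnp_prob_compl: "gnp_prob n p P = 1 - gnp_prob n p (\<lambda>E. \<not> P E)"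
proof -
  let ?A = "all_edges n"
  let ?w = "\<lambda>E. p ^ card E * (1 - p) ^ (card ?A - card E)"
  have fin: "finite {E. E \<subseteq> ?A \<and> Q E}" for Q
    using finite_all_edges by (auto intro: finite_subset[of _ "Pow ?A"])
  have disj: "{E. E \<subseteq> ?A \<and> P E} \<inter> {E. E \<subseteq> ?A \<and> \<not> P E} = {}" by blast
  have "1 = gnp_prob n p (\<lambda>E. True)" by (rule gnp_prob_True[symmetric])
  also have "\<dots> = sum ?w ({E. E \<subseteq> ?A \<and> P E} \<union> {E. E \<subseteq> ?A \<and> \<not> P E})"
    unfolding gnp_prob_def by (rule sum.cong[OF _ refl]) blast
  also have "\<dots> = gnp_prob n p P + gnp_prob n p (\<lambda>E. \<not> P E)"
    unfolding gnp_prob_def by (rule sum.union_disjoint[OF fin fin disj])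
  finally show ?thesis by simp
qed

lemma gnp_prob_nonneg: "0 \<le> p \<Longrightarrow> p \<le> 1 \<Longrightarrow> 0 \<le> gnp_prob n p P"
  unfolding gnp_prob_def by (intro sum_nonneg) simp

lemma gnp_prob_mono:
  assumes "0 \<le> p" "p \<le> 1" "\<And>E. E \<subseteq> all_edges n \<Longrightarrow> P E \<Longrightarrow> Q E"
  shows "gnp_prob n p P \<le> gnp_prob n p Q"
  unfolding gnp_prob_def
proof (rule sum_mono2)
  show "finite {E. E \<subseteq> all_edges n \<and> Q E}"
    using finite_all_edges by (auto intro: finite_subset[of _ "Pow (all_edges n)"])
qed (use assms in auto)

lemma gnp_prob_disj_le:
  assumes "0 \<le> p" "p \<le> 1"
  shows "gnp_prob n p (\<lambda>E. P E \<or> Q E) \<le> gnp_prob n p P + gnp_prob n p Q"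
proof -
  let ?A = "all_edges n"
  let ?w = "\<lambda>E. p ^ card E * (1 - p) ^ (card ?A - card E)"
  have fin: "finite {E. E \<subseteq> ?A \<and> R E}" for R
    using finite_all_edges by (auto intro: finite_subset[of _ "Pow ?A"])
  have "gnp_prob n p (\<lambda>E. P E \<or> Q E) = sum ?w ({E. E \<subseteq> ?A \<and> P E} \<union> {E. E \<subseteq> ?A \<and> Q E})"
    unfolding gnp_prob_def by (rule sum.cong) auto
  also have "\<dots> = gnp_prob n p P + gnp_prob n p Q - sum ?w ({E. E \<subseteq> ?A \<and> P E} \<inter> {E. E \<subseteq> ?A \<and> Q E})"
    unfolding gnp_prob_def by (rule sum_Un[OF fin fin])
  also have "\<dots> \<le> gnp_prob n p P + gnp_prob n p Q"
    using assms by (simp add: sum_nonneg)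
  finally show ?thesis .
qed

lemma gnp_prob_Bex_le:
  assumes "0 \<le> p" "p \<le> 1" "finite I"
  shows "gnp_prob n p (\<lambda>E. \<exists>i\<in>I. Q i E) \<le> (\<Sum>i\<in>I. gnp_prob n p (Q i))"
  using assms(3)
proof (induction I rule: finite_induct)
  case empty
  then show ?case by (simp add: gnp_prob_def)
next
  case (insert x I)
  have "gnp_prob n p (\<lambda>E. \<exists>i\<in>insert x I. Q i E) \<le> gnp_prob n p (Q x) + gnp_prob n p (\<lambda>E. \<exists>i\<in>I. Q i E)"
    using gnp_prob_disj_le[OF assms(1,2)] by simp
  with insert show ?case by simp
qed

definition nonexpanding_pairs :: "real \<Rightarrow> nat \<Rightarrow> (nat set \<times> nat set) set" where
  "nonexpanding_pairs b n = {(S, U). S \<subseteq> {..<n} \<and> 0 < card S \<and> real (card S) \<le> real n / 2 \<and>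
     U \<subseteq> {..<n} \<and> real (card U) < b * real (card S)}"

definition cut_edges :: "nat \<Rightarrow> nat set \<Rightarrow> nat set \<Rightarrow> nat set set" where
  "cut_edges n S U = (\<lambda>(u, v). {u, v}) ` (S \<times> ({..<n} - S - U))"

lemma nonexpanding_pairs_subset: "nonexpanding_pairs b n \<subseteq> (Pow {..<n} - {{}}) \<times> Pow {..<n}"
  unfolding nonexpanding_pairs_def by auto

lemma finite_nonexpanding_pairs: "finite (nonexpanding_pairs b n)"
  by (rule finite_subset[OF nonexpanding_pairs_subset]) auto

lemma card_nonexpanding_pairs_le: "card (nonexpanding_pairs b n) \<le> 2 ^ n * 2 ^ n"
proof -
  have "card (nonexpanding_pairs b n) \<le> card (Pow {..<n} \<times> Pow {..<n})"
    by (intro card_mono) (auto simp: nonexpanding_pairs_def)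
  then show ?thesis by (simp add: card_cartesian_product card_Pow)
qed

lemma cut_edges_subset: "S \<subseteq> {..<n} \<Longrightarrow> cut_edges n S U \<subseteq> all_edges n"
  unfolding cut_edges_def all_edges_def by auto

lemma card_cut_edges: "finite S \<Longrightarrow> card (cut_edges n S U) = card S * card ({..<n} - S - U)"
  unfolding cut_edges_def
  by (subst card_image) (auto simp: inj_on_def doubleton_eq_iff card_cartesian_product)

lemma nonexpanding_imp_empty_cut:
  assumes n: "2 \<le> n" and E: "E \<subseteq> all_edges n" and b: "iota_v n E < b"
  shows "\<exists>(S, U)\<in>nonexpanding_pairs b n. E \<inter> cut_edges n S U = {}"
proof -
  let ?C = "{S. S \<subseteq> {..<n} \<and> 0 < card S \<and> real (card S) \<le> real n / 2}"
  let ?r = "\<lambda>S. real (card (nbhd E S - S)) / real (card S)"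
  have "finite ?C" by (rule finite_subset[of _ "Pow {..<n}"]) auto
  moreover have "{0} \<in> ?C" using n by auto
  ultimately have "Min (?r ` ?C) \<in> ?r ` ?C" by (intro Min_in) auto
  moreover have "iota_v n E = Min (?r ` ?C)"
    unfolding iota_v_def by (rule arg_cong[where f = Min]) auto
  ultimately obtain S where S: "S \<in> ?C" and "?r S < b" using b by auto
  then have small: "real (card (nbhd E S - S)) < b * real (card S)"
    by (simp add: divide_less_eq)
  have "nbhd E S \<subseteq> {..<n}"
    using E unfolding nbhd_def all_edges_def by (auto simp: doubleton_eq_iff)
  with S small have "(S, nbhd E S - S) \<in> nonexpanding_pairs b n"
    unfolding nonexpanding_pairs_def by auto
  moreover have "E \<inter> cut_edges n S (nbhd E S - S) = {}"
    unfolding cut_edges_def nbhd_def by auto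
  ultimately show ?thesis by blast
qed

lemma empty_cut_prob_le:
  fixes p b :: real
  assumes p: "0 \<le> p" "p \<le> 1" and SU: "(S, U) \<in> nonexpanding_pairs b n"
  shows "gnp_prob n p (\<lambda>E. E \<inter> cut_edges n S U = {})
    \<le> exp (- p * card S * (real n - card S - b * card S))"
proof -
  let ?W = "{..<n} - S - U"
  have S: "S \<subseteq> {..<n}" and U: "U \<subseteq> {..<n}" and "real (card U) < b * card S"
    using SU unfolding nonexpanding_pairs_def by auto
  moreover have fin: "finite S" "finite U" using S U finite_subset by auto
  then have "card {..<n} - card (S \<union> U) \<le> card ?W"
    using diff_card_le_card_Diff[of "S \<union> U" "{..<n}"] by (simp add: set_diff_eq)
  moreover have "card (S \<union> U) \<le> card S + card U" by (rule card_Un_le)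
  ultimately have W: "real n - card S - b * card S \<le> card ?W" by auto
  have "gnp_prob n p (\<lambda>E. E \<inter> cut_edges n S U = {}) = (1 - p) ^ card (cut_edges n S U)"
    using S by (intro gnp_prob_disjoint cut_edges_subset)
  also have "\<dots> \<le> exp (- p) ^ card (cut_edges n S U)"
    using p by (intro power_mono) (auto simp: exp_ge_add_one_self[of "-p", simplified])
  also have "\<dots> = exp (- p * card S * card ?W)"
    using fin by (simp add: card_cut_edges exp_of_nat_mult[symmetric] algebra_simps)
  also have "\<dots> \<le> exp (- p * card S * (real n - card S - b * card S))"
    using W p by (simp add: mult_left_mono)
  finally show ?thesis .
qed

lemma cut_exponent_ge:
  fixes n s u :: nat and p k b :: real
  assumes p: "0 \<le> p" and np: "k * ln n \<le> n * p" and k: "2 < k" and b: "0 < b" "b < 1"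
    and s: "2 * s \<le> n" and u: "u \<le> s"
  shows "min ((k + 2) / 4 * (s + u) * ln n) ((k - 2) * (1 - b) / 8 * n * ln n)
    \<le> p * s * (real n - s - b * s)"
proof -
  \<comment> \<open>sets of size at most \<open>e n\<close> keep the factor \<open>k (1 - 2 e) = (k + 2) / 2 > 2\<close>\<close>
  define e where "e = (k - 2) / (4 * k)"
  have L: "0 \<le> ln (real n)" by (cases n) simp_all
  have e: "0 < e" "e < 1 / 2" "k * (1 - 2 * e) = (k + 2) / 2" "k * e = (k - 2) / 4"
    using k unfolding e_def by (auto simp: field_simps)
  have ps: "0 \<le> p * s" using p by simp
  have bs: "b * s \<le> s" using b by (simp add: mult_left_le_one_le)
  consider "s \<le> e * n" | "e * n < s" by linarith
  then show ?thesis
  proof cases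
    case 1
    have "(k + 2) / 4 * (s + u) * ln n \<le> (k + 2) / 4 * (2 * s) * ln n"
      using k u L by (intro mult_right_mono mult_left_mono) auto
    also have "\<dots> = k * (1 - 2 * e) * s * ln n" by (simp add: e(3))
    also have "\<dots> = k * ln n * ((1 - 2 * e) * s)" by (simp add: algebra_simps)
    also have "\<dots> \<le> n * p * ((1 - 2 * e) * s)"
      using np e by (intro mult_right_mono) auto
    also have "\<dots> = p * s * (n - 2 * (e * n))" by (simp add: algebra_simps)
    also have "\<dots> \<le> p * s * (real n - s - b * s)"
      using 1 bs ps by (intro mult_left_mono) auto
    finally show ?thesis by (rule min.coboundedI1)
  next
    case 2
    have "(k - 2) * (1 - b) / 8 * n * ln n = k * ln n * (e * n) * ((1 - b) / 2)"
      using k by (simp add: e_def field_simps)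
    also have "\<dots> \<le> n * p * (e * n) * ((1 - b) / 2)"
      using np e b by (intro mult_right_mono) auto
    also have "\<dots> = p * (e * n) * ((1 - b) * n / 2)" by (simp add: algebra_simps)
    also have "\<dots> \<le> p * s * ((1 - b) * n / 2)"
      using 2 p b by (intro mult_right_mono mult_left_mono) auto
    also have "\<dots> \<le> p * s * (real n - s - b * s)"
    proof (rule mult_left_mono[OF _ ps])
      have "(1 + b) * s \<le> (1 + b) * (n / 2)" using s b by (intro mult_left_mono) auto
      then show "(1 - b) * n / 2 \<le> real n - s - b * s" by (simp add: field_simps)
    qed
    finally show ?thesis by (rule min.coboundedI2)
  qed
qed

lemma sum_Pow_power_card:
  fixes y :: "'a :: comm_semiring_1"
  assumes "finite A"
  shows "(\<Sum>X\<in>Pow A. y ^ card X) = (1 + y) ^ card A"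
  using prod_add[OF assms, of "\<lambda>_. y" "\<lambda>_. 1"] by (simp add: add.commute)

lemma expansion_error_tendsto_0:
  fixes a c :: real
  assumes "1 < a" "0 < c"
  shows "(\<lambda>n::nat. (exp (n * exp (- a * ln n)) - 1) * exp (n * exp (- a * ln n))
      + 2 ^ n * 2 ^ n * exp (- c * n * ln n)) \<longlonglongrightarrow> 0"
proof -
  have "(\<lambda>n::nat. (exp (n * exp (- a * ln n)) - 1) * exp (n * exp (- a * ln n))) \<longlonglongrightarrow> 0"
    using assms by real_asymp
  moreover have "(\<lambda>n::nat. 2 ^ n * 2 ^ n * exp (- c * n * ln n) :: real) \<longlonglongrightarrow> 0"
    using assms by real_asymp
  ultimately show ?thesis using tendsto_add by fastforce
qed

lemma expansion_constant_gt_two: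
  fixes b t k :: real
  assumes b: "0 < b" "b < 1" and t: "(1 + ln 2) / (1 - b) - ln (1 - b) < t"
    and k: "2 * t / (1 - exp (- t)) < k"
  shows "2 < k"
proof -
  have "1 + ln 2 \<le> (1 + ln 2) / (1 - b)"
    using b by (simp add: le_divide_eq mult_left_le)
  moreover have "0 < ln (2::real)" "ln (1 - b) < 0" using b by simp_all
  ultimately have "1 < t" using t by linarith
  then have "2 * t \<le> 2 * t / (1 - exp (- t))"
    by (simp add: le_divide_eq)
  with \<open>1 < t\<close> k show ?thesis by linarith
qed

lemma empty_cut_prob_bound:
  fixes p k b :: real
  assumes p: "0 \<le> p" "p \<le> 1" and np: "k * ln n \<le> n * p" and k: "2 < k" and b: "0 < b" "b < 1"
    and SU: "(S, U) \<in> nonexpanding_pairs b n"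
  shows "gnp_prob n p (\<lambda>E. E \<inter> cut_edges n S U = {})
    \<le> exp (- ((k + 2) / 4) * ln n) ^ card S * exp (- ((k + 2) / 4) * ln n) ^ card U
      + exp (- ((k - 2) * (1 - b) / 8) * n * ln n)"
proof -
  let ?A = "(k + 2) / 4 * (card S + card U) * ln n"
  let ?B = "(k - 2) * (1 - b) / 8 * n * ln n"
  have "2 * card S \<le> n" "real (card U) < b * card S"
    using SU unfolding nonexpanding_pairs_def by auto
  moreover have "b * card S \<le> card S" using b by (simp add: mult_left_le_one_le)
  ultimately have "min ?A ?B \<le> p * card S * (real n - card S - b * card S)"
    using p np k b by (intro cut_exponent_ge) auto
  then have "gnp_prob n p (\<lambda>E. E \<inter> cut_edges n S U = {}) \<le> exp (- min ?A ?B)"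
    by (intro order_trans[OF empty_cut_prob_le[OF p SU]]) simp
  also have "\<dots> \<le> exp (- ?A) + exp (- ?B)"
    by (cases "?A \<le> ?B") (simp_all add: min_def)
  also have "exp (- ?A) = exp (- ((k + 2) / 4) * ln n) ^ card S * exp (- ((k + 2) / 4) * ln n) ^ card U"
    by (simp add: exp_of_nat_mult[symmetric] exp_add[symmetric] field_simps)
  finally show ?thesis by simp
qed

lemma sum_nonexpanding_pairs_le:
  fixes y :: real
  assumes y: "0 \<le> y"
  shows "(\<Sum>(S, U)\<in>nonexpanding_pairs b n. y ^ card S * y ^ card U) \<le> (exp (n * y) - 1) * exp (n * y)"
proof -
  let ?V = "{..<n}"
  have "(\<Sum>(S, U)\<in>nonexpanding_pairs b n. y ^ card S * y ^ card U)
      \<le> (\<Sum>(S, U)\<in>(Pow ?V - {{}}) \<times> Pow ?V. y ^ card S * y ^ card U)"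
    using nonexpanding_pairs_subset y by (intro sum_mono2) auto
  also have "\<dots> = (\<Sum>S\<in>Pow ?V - {{}}. y ^ card S) * (\<Sum>U\<in>Pow ?V. y ^ card U)"
    by (simp add: sum_product sum.cartesian_product)
  also have "\<dots> = ((1 + y) ^ n - 1) * (1 + y) ^ n"
    by (simp add: sum_diff1 sum_Pow_power_card)
  also have "\<dots> \<le> (exp (n * y) - 1) * exp (n * y)"
  proof -
    have "(1 + y) ^ n \<le> exp y ^ n"
      using y by (intro power_mono) (auto simp: add.commute)
    then have "(1 + y) ^ n \<le> exp (n * y)" by (simp add: exp_of_nat_mult)
    moreover have "1 \<le> (1 + y) ^ n" using y by simp
    ultimately show ?thesis using y by (intro mult_mono) auto
  qed
  finally show ?thesis .
qed

lemma gnp_prob_nonexpanding_le: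
  fixes p k b :: real
  assumes n: "2 \<le> n" and p: "0 \<le> p" "p \<le> 1" and np: "k * ln n \<le> n * p"
    and k: "2 < k" and b: "0 < b" "b < 1"
  defines "y \<equiv> exp (- ((k + 2) / 4) * ln n)" and "z \<equiv> exp (- ((k - 2) * (1 - b) / 8) * n * ln n)"
  shows "gnp_prob n p (\<lambda>E. iota_v n E < b) \<le> (exp (n * y) - 1) * exp (n * y) + 2 ^ n * 2 ^ n * z"
proof -
  let ?I = "nonexpanding_pairs b n"
  have "gnp_prob n p (\<lambda>E. iota_v n E < b)
      \<le> gnp_prob n p (\<lambda>E. \<exists>(S, U)\<in>?I. E \<inter> cut_edges n S U = {})"
    using p nonexpanding_imp_empty_cut[OF n] by (intro gnp_prob_mono) auto
  also have "\<dots> \<le> (\<Sum>(S, U)\<in>?I. gnp_prob n p (\<lambda>E. E \<inter> cut_edges n S U = {}))"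
    using gnp_prob_Bex_le[OF p finite_nonexpanding_pairs] by (simp add: case_prod_unfold)
  also have "\<dots> \<le> (\<Sum>(S, U)\<in>?I. y ^ card S * y ^ card U + z)"
    unfolding y_def z_def
    by (intro sum_mono) (clarify, rule empty_cut_prob_bound[OF p np k b])
  also have "\<dots> = (\<Sum>(S, U)\<in>?I. y ^ card S * y ^ card U) + card ?I * z"
    by (simp add: case_prod_unfold sum.distrib)
  also have "\<dots> \<le> (exp (n * y) - 1) * exp (n * y) + 2 ^ n * 2 ^ n * z"
  proof (rule add_mono)
    show "(\<Sum>(S, U)\<in>?I. y ^ card S * y ^ card U) \<le> (exp (n * y) - 1) * exp (n * y)"
      unfolding y_def by (rule sum_nonexpanding_pairs_le) simp
    have "real (card ?I) \<le> 2 ^ n * 2 ^ n"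
      using card_nonexpanding_pairs_le of_nat_mono by fastforce
    then show "card ?I * z \<le> 2 ^ n * 2 ^ n * z"
      unfolding z_def by (intro mult_right_mono) auto
  qed
  finally show ?thesis .
qed

theorem mainTheorem4:
  fixes b t k :: real and p :: "nat \<Rightarrow> real"
  assumes "0 < b" "b < 1"
    and "t > (1 + ln 2) / (1 - b) - ln (1 - b)"
    and "k > 2 * t / (1 - exp (- t))"
    and "\<And>n. 0 \<le> p n \<and> p n \<le> 1"
    and "\<forall>\<^sub>F n in sequentially. real n * p n \<ge> k * ln (real n)"
  shows "(\<lambda>n. gnp_prob n (p n) (\<lambda>E. iota_v n E \<ge> b)) \<longlonglongrightarrow> 1"
proof -
  have k: "2 < k" using assms(1-4) by (rule expansion_constant_gt_two)
  define bad where "bad n = gnp_prob n (p n) (\<lambda>E. iota_v n E < b)" for n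
  have "bad \<longlonglongrightarrow> 0"
  proof (rule tendsto_sandwich[OF _ _ tendsto_const
        expansion_error_tendsto_0[of "(k + 2) / 4" "(k - 2) * (1 - b) / 8"]])
    show "\<forall>\<^sub>F n in sequentially. 0 \<le> bad n"
      using assms(5) by (simp add: bad_def gnp_prob_nonneg)
    show "\<forall>\<^sub>F n in sequentially. bad n \<le> (exp (n * exp (- ((k + 2) / 4) * ln n)) - 1)
        * exp (n * exp (- ((k + 2) / 4) * ln n))
        + 2 ^ n * 2 ^ n * exp (- ((k - 2) * (1 - b) / 8) * n * ln n)"
      using assms(6) eventually_ge_at_top[of 2]
    proof eventually_elim
      case (elim n)
      then show ?case
        unfolding bad_def using assms(1,2,5) k by (intro gnp_prob_nonexpanding_le) auto
    qed
  qed (use k assms(1,2) in auto)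
  moreover have "gnp_prob n (p n) (\<lambda>E. b \<le> iota_v n E) = 1 - bad n" for n
    unfolding bad_def by (subst gnp_prob_compl) (simp add: not_le)
  ultimately show ?thesis
    using tendsto_diff[OF tendsto_const, of bad 0 sequentially 1] by simp
qed

end
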